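(* Let $\mathcal{I}$ be a finite index set (along a sequence with $|\mathcal{I}|\to\infty$), and for $i\in\mathcal{I}$ let $X_i$ be mutually independent real random variables with finite fourth moments, variances $\sigma_i^2>0$ and kurtosis $\kappa_i$. For each $i$ let $X_i^{(1)},\dots,X_i^{(R_i)}$ be i.i.d. copies of $X_i$, independent of each other across $i$ and of $(X_i)_i$, with mean $\bar X_i$. Let $X_{\mathcal{I}}=\sum_{i\in\mathcal{I}}X_i$, $\hat\mu_{\mathcal{I}}=\sum_{i\in\mathcal{I}}\bar X_i$, $\bar\sigma^2=\frac1{|\mathcal{I}|}\sum_i\sigma_i^2$, $\gamma^2=(\frac1{|\mathcal{I}|}\sum_i\sigma_i^4-\bar\sigma^4)/\bar\sigma^4$. Assume (R1) $R_i\ge2$ for all $i$, fixed integers; (R2) $\kappa_i\le\kappa_{\max}$ for all $i$, with $\kappa_{\max}$ independent of $|\mathcal{I}|$; (R3) $\gamma^2$ bounded as $|\mathcal{I}|\to\infty$. Then $$\frac{X_{\mathcal{I}}-\hat\mu_{\mathcal{I}}}{\sqrt{\operatorname{Var}(X_{\mathcal{I}}-\hat\mu_{\mathcal{I}})}}\xrightarrow{d}N(0,1)\quad\text{as }|\mathcal{I}|\to\infty.$$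
   Context: Kurtosis of $Y$ with variance $s^2$ is $\operatorname{E}[(Y-\operatorname{E}Y)^4]/s^4$. *)

theory Defs
  imports "HOL-Probability.Probability"
begin

definition kurtosis :: "'a measure \<Rightarrow> ('a \<Rightarrow> real) \<Rightarrow> real" where
  "kurtosis M Y = (\<integral>x. (Y x - (\<integral>z. Y z \<partial>M)) ^ 4 \<partial>M) / (prob_space.variance M Y) ^ 2"

definition sigma_bar_sq :: "'a measure \<Rightarrow> 'i set \<Rightarrow> ('i \<Rightarrow> 'a \<Rightarrow> real) \<Rightarrow> real" where
  "sigma_bar_sq M I X = (\<Sum>i\<in>I. prob_space.variance M (X i)) / real (card I)"

definition gamma_sq :: "'a measure \<Rightarrow> 'i set \<Rightarrow> ('i \<Rightarrow> 'a \<Rightarrow> real) \<Rightarrow> real" where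
  "gamma_sq M I X =
     ((\<Sum>i\<in>I. (prob_space.variance M (X i)) ^ 2) / real (card I) - (sigma_bar_sq M I X) ^ 2)
       / (sigma_bar_sq M I X) ^ 2"

end

theory Submission
  imports Defs
begin

text \<open>
  Let W_i be X_i minus the mean of its replicates. The W_i are independent and centred. Since X_i
  is uncorrelated with its replicates, E W_i^2 >= sigma_i^2, and by convexity of x^4,
  E W_i^4 <= 16 E (X_i - E X_i)^4 <= 16 kappa_max sigma_i^4. Hence the Lyapunov ratio
  (sum of E W_i^4) / (Var of sum of W_i)^2 is at most
  16 kappa_max (sum of sigma_i^4) / (sum of sigma_i^2)^2 = 16 kappa_max (1 + gamma^2) / |I|,
  which tends to 0.

  The Lyapunov central limit theorem with fourth moments is proved on characteristic functions.
  For centred U with v = E U^2 and w = E U^4, E exp(itU) is within |t|^3/6 (e v + w/e) of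
  1 - t^2 v/2, as |U|^3 <= e U^2 + U^4/e, and 1 - t^2 v/2 is within t^4 w/4 of exp(-t^2 v/2).
  Products of numbers of modulus at most 1 differ by at most the sum of the differences of the
  factors, so for the sum normalised to unit variance the distance of the characteristic function
  to exp(-t^2/2) is at most |t|^3/6 (e + L/e) + t^4 L/4, where L is the Lyapunov ratio; choosing
  e close to sqrt L makes this tend to 0.
\<close>

section \<open>Moments and independence\<close>

lemma (in finite_measure) integrable_power_le_even:
  fixes f :: "'a \<Rightarrow> real"
  assumes [measurable]: "f \<in> borel_measurable M"
    and "even n" "integrable M (\<lambda>x. f x ^ n)" "k \<le> n"
  shows "integrable M (\<lambda>x. f x ^ k)"
proof (rule Bochner_Integration.integrable_bound)
  show "integrable M (\<lambda>x. 1 + f x ^ n)"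
    using assms(3) by auto
  show "AE x in M. norm (f x ^ k) \<le> norm (1 + f x ^ n)"
  proof (rule AE_I2)
    fix x
    have "\<bar>f x\<bar> ^ k \<le> 1 + \<bar>f x\<bar> ^ n"
    proof (cases "\<bar>f x\<bar> \<le> 1")
      case True
      then show ?thesis
        using power_le_one[OF abs_ge_zero True, of k] zero_le_power[OF abs_ge_zero, of "f x" n] by linarith
    next
      case False
      then show ?thesis
        using power_increasing[of k n "\<bar>f x\<bar>"] \<open>k \<le> n\<close> by linarith
    qed
    then show "norm (f x ^ k) \<le> norm (1 + f x ^ n)"
      using \<open>even n\<close> by (simp add: power_abs power_even_abs)
  qed
qed measurable

lemma
  fixes f :: "'b \<Rightarrow> 'c::{banach, second_countable_topology}"
  assumes [measurable]: "X \<in> measurable M N" "Y \<in> measurable M N" "f \<in> borel_measurable N"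
    and "distr M N Y = distr M N X"
  shows integrable_comp_eq_if_distr_eq: "integrable M (\<lambda>x. f (Y x)) \<longleftrightarrow> integrable M (\<lambda>x. f (X x))"
    and integral_comp_eq_if_distr_eq: "(\<integral>x. f (Y x) \<partial>M) = (\<integral>x. f (X x) \<partial>M)"
  by (metis assms integrable_distr_eq, metis assms integral_distr)

lemma (in prob_space)
  fixes Z :: "'k \<Rightarrow> 'a \<Rightarrow> real"
  assumes indep: "indep_vars (\<lambda>_. borel) Z K" and "a \<in> K" "b \<in> K" "a \<noteq> b"
    and "integrable M (Z a)" "integrable M (Z b)"
  shows indep_vars_integral_mult: "expectation (\<lambda>x. Z a x * Z b x) = expectation (Z a) * expectation (Z b)"
    and indep_vars_integrable_mult: "integrable M (\<lambda>x. Z a x * Z b x)"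
proof -
  have indep_ab: "indep_vars (\<lambda>_. borel) Z {a, b}"
    using indep by (rule indep_vars_subset) (use assms in auto)
  have "\<And>k. k \<in> {a, b} \<Longrightarrow> integrable M (Z k)"
    using assms by auto
  note product = indep_vars_lebesgue_integral[OF _ indep_ab this] indep_vars_integrable[OF _ indep_ab this]
  show "expectation (\<lambda>x. Z a x * Z b x) = expectation (Z a) * expectation (Z b)"
    using product(1) \<open>a \<noteq> b\<close> by simp
  show "integrable M (\<lambda>x. Z a x * Z b x)"
    using product(2) \<open>a \<noteq> b\<close> by simp
qed

lemma (in prob_space) variance_indep_sum_centred:
  fixes W :: "'j \<Rightarrow> 'a \<Rightarrow> real"
  assumes "finite J" and indep: "indep_vars (\<lambda>_. borel) W J"
    and square: "\<And>j. j \<in> J \<Longrightarrow> integrable M (\<lambda>x. W j x ^ 2)"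
    and centred: "\<And>j. j \<in> J \<Longrightarrow> expectation (W j) = 0"
  shows "variance (\<lambda>x. \<Sum>j\<in>J. W j x) = (\<Sum>j\<in>J. expectation (\<lambda>x. W j x ^ 2))"
proof -
  have integrable: "integrable M (W j)" if "j \<in> J" for j
    using indep that square[OF that] unfolding indep_vars_def2
    by (blast intro: square_integrable_imp_integrable)
  have products: "integrable M (\<lambda>x. W i x * W j x)
      \<and> expectation (\<lambda>x. W i x * W j x) = (if i = j then expectation (\<lambda>x. W i x ^ 2) else 0)"
    if "i \<in> J" "j \<in> J" for i j
    using square[OF that(1)] indep_vars_integral_mult[OF indep that _ integrable integrable]
      indep_vars_integrable_mult[OF indep that _ integrable integrable] centred that
    by (cases "i = j") (auto simp: power2_eq_square)
  have "expectation (\<lambda>x. \<Sum>j\<in>J. W j x) = 0"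
    using integrable centred by (simp add: Bochner_Integration.integral_sum)
  then have "variance (\<lambda>x. \<Sum>j\<in>J. W j x) = expectation (\<lambda>x. \<Sum>i\<in>J. \<Sum>j\<in>J. W i x * W j x)"
    by (simp add: power2_eq_square sum_product)
  also have "\<dots> = (\<Sum>i\<in>J. \<Sum>j\<in>J. expectation (\<lambda>x. W i x * W j x))"
    using products by (simp add: Bochner_Integration.integral_sum integrable_sum)
  also have "\<dots> = (\<Sum>i\<in>J. expectation (\<lambda>x. W i x ^ 2))"
    using products \<open>finite J\<close> by (simp cong: sum.cong)
  finally show ?thesis .
qed

lemma (in prob_space) power2_expectation_power2_le:
  fixes U :: "'a \<Rightarrow> real"
  assumes [measurable]: "U \<in> borel_measurable M" and "integrable M (\<lambda>x. U x ^ 4)"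
  shows "(expectation (\<lambda>x. U x ^ 2)) ^ 2 \<le> expectation (\<lambda>x. U x ^ 4)"
proof -
  have "integrable M (\<lambda>x. U x ^ 2)"
    by (rule integrable_power_le_even[OF _ _ assms(2)]) auto
  then have "variance (\<lambda>x. U x ^ 2) = expectation (\<lambda>x. U x ^ 4) - (expectation (\<lambda>x. U x ^ 2)) ^ 2"
    using assms(2) by (subst variance_eq) (simp_all flip: power_mult)
  then show ?thesis
    using variance_positive[of "\<lambda>x. U x ^ 2"] by simp
qed

section \<open>A Lyapunov central limit theorem\<close>

lemma abs_one_minus_sub_exp_minus_le:
  fixes x :: real
  assumes "0 \<le> x"
  shows "\<bar>(1 - x) - exp (- x)\<bar> \<le> x ^ 2"
proof -
  have "1 - x \<le> exp (- x)"
    using exp_ge_add_one_self[of "- x"] by simp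
  moreover have "exp (- x) \<le> 1 / (1 + x)"
    using exp_ge_add_one_self[of x] assms by (simp add: exp_minus field_simps)
  moreover have "1 / (1 + x) \<le> 1 - x + x ^ 2"
    using assms by (simp add: field_simps power2_eq_square)
  ultimately show ?thesis
    by simp
qed

lemma abs_power3_le:
  fixes u e :: real
  assumes "e > 0"
  shows "\<bar>u\<bar> ^ 3 \<le> e * u ^ 2 + u ^ 4 / e"
proof (cases "\<bar>u\<bar> \<le> e")
  case True
  have "\<bar>u\<bar> ^ 3 = \<bar>u\<bar> * u ^ 2"
    by (simp add: power2_eq_square power3_eq_cube abs_mult)
  also have "\<dots> \<le> e * u ^ 2"
    using True by (intro mult_right_mono) auto
  finally show ?thesis
    using assms by (simp add: add_increasing2)
next
  case False
  have "e * \<bar>u\<bar> ^ 3 \<le> \<bar>u\<bar> * \<bar>u\<bar> ^ 3"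
    using False by (intro mult_right_mono) auto
  also have "\<dots> = u ^ 4"
    by (simp add: power_abs flip: power_Suc)
  finally have "\<bar>u\<bar> ^ 3 \<le> u ^ 4 / e"
    using assms by (simp add: field_simps mult.commute)
  then show ?thesis
    using assms by (simp add: add_increasing)
qed

lemma (in prob_space) cmod_char_sub_exp_le:
  fixes U :: "'a \<Rightarrow> real"
  assumes [measurable]: "U \<in> borel_measurable M"
    and fourth: "integrable M (\<lambda>x. U x ^ 4)" and centred: "expectation U = 0" and "e > 0"
  defines "v \<equiv> expectation (\<lambda>x. U x ^ 2)" and "w \<equiv> expectation (\<lambda>x. U x ^ 4)"
  shows "cmod (char (distr M borel U) t - exp (- (t ^ 2 * v / 2)))
           \<le> \<bar>t\<bar> ^ 3 / 6 * (e * v + w / e) + t ^ 4 / 4 * w"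
proof -
  have moment: "integrable M (\<lambda>x. U x ^ k)" if "k \<le> 4" for k
    by (rule integrable_power_le_even[OF _ _ fourth that]) auto
  have "cmod (char (distr M borel U) t - (1 - t ^ 2 * v / 2))
      \<le> t ^ 2 / 6 * expectation (\<lambda>x. min (6 * U x ^ 2) (\<bar>t\<bar> * \<bar>U x\<bar> ^ 3))"
    using moment[of 1] moment[of 2] centred by (intro char_approx3') (auto simp: v_def)
  also have "\<dots> \<le> t ^ 2 / 6 * expectation (\<lambda>x. \<bar>t\<bar> * (e * U x ^ 2 + U x ^ 4 / e))"
  proof (intro mult_left_mono integral_mono)
    show "integrable M (\<lambda>x. min (6 * U x ^ 2) (\<bar>t\<bar> * \<bar>U x\<bar> ^ 3))"
      using moment[of 2] integrable_abs[OF moment[of 3]] by (intro integrable_min) (auto simp: power_abs)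
    show "min (6 * U x ^ 2) (\<bar>t\<bar> * \<bar>U x\<bar> ^ 3) \<le> \<bar>t\<bar> * (e * U x ^ 2 + U x ^ 4 / e)" for x
      using mult_left_mono[OF abs_power3_le[OF \<open>e > 0\<close>, of "U x"] abs_ge_zero[of t]] by linarith
  qed (use moment[of 2] moment[of 4] in auto)
  also have "\<dots> = \<bar>t\<bar> ^ 3 / 6 * (e * v + w / e)"
    using moment[of 2] moment[of 4]
    by (simp add: v_def w_def power2_eq_square power3_eq_cube abs_mult_self_eq)
  finally have char_quadratic: "cmod (char (distr M borel U) t - complex_of_real (1 - t ^ 2 * v / 2))
      \<le> \<bar>t\<bar> ^ 3 / 6 * (e * v + w / e)"
    by simp
  have "0 \<le> v"
    unfolding v_def by (simp add: integral_nonneg_AE)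
  then have "\<bar>(1 - t ^ 2 * v / 2) - exp (- (t ^ 2 * v / 2))\<bar> \<le> (t ^ 2 * v / 2) ^ 2"
    by (intro abs_one_minus_sub_exp_minus_le) simp
  also have "\<dots> = t ^ 4 / 4 * v ^ 2"
    by (simp add: power_mult_distrib power_divide flip: power_mult)
  also have "\<dots> \<le> t ^ 4 / 4 * w"
    unfolding v_def w_def by (intro mult_left_mono power2_expectation_power2_le fourth) auto
  finally have quadratic_exp: "cmod (complex_of_real (1 - t ^ 2 * v / 2) - exp (- (t ^ 2 * v / 2)))
      \<le> t ^ 4 / 4 * w"
    by (simp flip: of_real_diff)
  show ?thesis
    by (rule norm_diff_triangle_le[OF char_quadratic quadratic_exp])
qed

lemma (in prob_space) cmod_char_indep_sum_sub_std_normal_le: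
  fixes U :: "'j \<Rightarrow> 'a \<Rightarrow> real"
  assumes "finite J" and indep: "indep_vars (\<lambda>_. borel) U J"
    and fourth: "\<And>j. j \<in> J \<Longrightarrow> integrable M (\<lambda>x. U j x ^ 4)"
    and centred: "\<And>j. j \<in> J \<Longrightarrow> expectation (U j) = 0"
    and unit_variance: "(\<Sum>j\<in>J. expectation (\<lambda>x. U j x ^ 2)) = 1" and "e > 0"
  defines "L \<equiv> \<Sum>j\<in>J. expectation (\<lambda>x. U j x ^ 4)"
  shows "cmod (char (distr M borel (\<lambda>x. \<Sum>j\<in>J. U j x)) t - char std_normal_distribution t)
           \<le> \<bar>t\<bar> ^ 3 / 6 * (e + L / e) + t ^ 4 / 4 * L"
proof -
  define v where "v j = expectation (\<lambda>x. U j x ^ 2)" for j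
  define w where "w j = expectation (\<lambda>x. U j x ^ 4)" for j
  have borel: "U j \<in> borel_measurable M" if "j \<in> J" for j
    using indep that unfolding indep_vars_def2 by simp
  have "(\<Sum>j\<in>J. - (t ^ 2 * v j / 2)) = - (t ^ 2) / 2"
    using unit_variance by (simp add: v_def sum_negf flip: sum_divide_distrib sum_distrib_left)
  then have "char std_normal_distribution t = complex_of_real (\<Prod>j\<in>J. exp (- (t ^ 2 * v j / 2)))"
    by (simp add: char_std_normal_distribution flip: exp_sum[OF \<open>finite J\<close>])
  then have char_normal: "char std_normal_distribution t = (\<Prod>j\<in>J. complex_of_real (exp (- (t ^ 2 * v j / 2))))"
    by (simp only: of_real_prod)
  have char_sum: "char (distr M borel (\<lambda>x. \<Sum>j\<in>J. U j x)) t = (\<Prod>j\<in>J. char (distr M borel (U j)) t)"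
    using indep by (rule char_distr_sum)
  have "cmod (char (distr M borel (\<lambda>x. \<Sum>j\<in>J. U j x)) t - char std_normal_distribution t)
      \<le> (\<Sum>j\<in>J. cmod (char (distr M borel (U j)) t - exp (- (t ^ 2 * v j / 2))))"
    unfolding char_sum char_normal
  proof (rule norm_prod_diff)
    show "cmod (char (distr M borel (U j)) t) \<le> 1" if "j \<in> J" for j
      using borel[OF that] by (intro real_distribution.cmod_char_le_1 real_distribution_distr)
    show "cmod (complex_of_real (exp (- (t ^ 2 * v j / 2)))) \<le> 1" for j
      by (simp add: v_def integral_nonneg_AE)
  qed
  also have "\<dots> \<le> (\<Sum>j\<in>J. \<bar>t\<bar> ^ 3 / 6 * (e * v j + w j / e) + t ^ 4 / 4 * w j)"
    unfolding v_def w_def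
    by (intro sum_mono cmod_char_sub_exp_le borel fourth centred \<open>e > 0\<close>)
  also have "\<dots> = \<bar>t\<bar> ^ 3 / 6 * (e + L / e) + t ^ 4 / 4 * L"
    using unit_variance
    by (simp add: L_def v_def w_def sum.distrib distrib_left flip: sum_distrib_left sum_divide_distrib)
  finally show ?thesis .
qed

lemma (in prob_space) cmod_char_normalised_sum_sub_std_normal_le:
  fixes W :: "'j \<Rightarrow> 'a \<Rightarrow> real"
  assumes "finite J" and indep: "indep_vars (\<lambda>_. borel) W J"
    and fourth: "\<And>j. j \<in> J \<Longrightarrow> integrable M (\<lambda>x. W j x ^ 4)"
    and centred: "\<And>j. j \<in> J \<Longrightarrow> expectation (W j) = 0"
    and "e > 0"
  defines "s \<equiv> variance (\<lambda>x. \<Sum>j\<in>J. W j x)"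
  defines "L \<equiv> (\<Sum>j\<in>J. expectation (\<lambda>x. W j x ^ 4)) / s ^ 2"
  assumes "s > 0"
  shows "cmod (char (distr M borel (\<lambda>x. (\<Sum>j\<in>J. W j x) / sqrt s)) t - char std_normal_distribution t)
           \<le> \<bar>t\<bar> ^ 3 / 6 * (e + L / e) + t ^ 4 / 4 * L"
proof -
  define U where "U = (\<lambda>j x. W j x / sqrt s)"
  have borel: "W j \<in> borel_measurable M" if "j \<in> J" for j
    using indep that unfolding indep_vars_def2 by simp
  have square: "integrable M (\<lambda>x. W j x ^ 2)" if "j \<in> J" for j
    by (rule integrable_power_le_even[OF borel[OF that] _ fourth[OF that]]) auto
  have "sqrt s ^ 4 = (sqrt s ^ 2) ^ 2"
    by (simp flip: power_mult)
  then have "sqrt s ^ 4 = s ^ 2"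
    using \<open>s > 0\<close> by simp
  then have U_power4: "(\<lambda>x. U j x ^ 4) = (\<lambda>x. W j x ^ 4 / s ^ 2)" for j
    by (simp add: U_def power_divide)
  have "(\<Sum>j\<in>J. expectation (\<lambda>x. U j x ^ 2)) = (\<Sum>j\<in>J. expectation (\<lambda>x. W j x ^ 2)) / s"
    using \<open>s > 0\<close> by (simp add: U_def power_divide sum_divide_distrib)
  also have "\<dots> = 1"
    using \<open>s > 0\<close> variance_indep_sum_centred[OF \<open>finite J\<close> indep square centred] by (simp add: s_def)
  finally have unit_variance: "(\<Sum>j\<in>J. expectation (\<lambda>x. U j x ^ 2)) = 1" .
  have "indep_vars (\<lambda>_. borel) U J"
    using indep_vars_compose2[OF indep, of "\<lambda>_ y. y / sqrt s" "\<lambda>_. borel"]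
    unfolding U_def by simp
  moreover have "integrable M (\<lambda>x. U j x ^ 4)" if "j \<in> J" for j
    using fourth[OF that] by (simp add: U_power4)
  moreover have "expectation (U j) = 0" if "j \<in> J" for j
    using centred[OF that] by (simp add: U_def)
  moreover have "(\<Sum>j\<in>J. expectation (\<lambda>x. U j x ^ 4)) = L"
    by (simp add: U_power4 L_def sum_divide_distrib)
  moreover have "(\<lambda>x. (\<Sum>j\<in>J. W j x) / sqrt s) = (\<lambda>x. \<Sum>j\<in>J. U j x)"
    by (simp add: U_def sum_divide_distrib)
  ultimately show ?thesis
    using cmod_char_indep_sum_sub_std_normal_le[OF \<open>finite J\<close> _ _ _ unit_variance \<open>e > 0\<close>] by simp
qed

theorem lyapunov_clt_fourth_moment:
  fixes M :: "nat \<Rightarrow> 'a measure" and J :: "nat \<Rightarrow> 'j set" and W :: "nat \<Rightarrow> 'j \<Rightarrow> 'a \<Rightarrow> real"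
  assumes prob: "\<And>n. prob_space (M n)" and fin: "\<And>n. finite (J n)"
    and indep: "\<And>n. prob_space.indep_vars (M n) (\<lambda>_. borel) (W n) (J n)"
    and fourth: "\<And>n j. j \<in> J n \<Longrightarrow> integrable (M n) (\<lambda>x. W n j x ^ 4)"
    and centred: "\<And>n j. j \<in> J n \<Longrightarrow> (\<integral>x. W n j x \<partial>M n) = 0"
    and variance_pos: "eventually (\<lambda>n. prob_space.variance (M n) (\<lambda>x. \<Sum>j\<in>J n. W n j x) > 0) sequentially"
    and lyapunov: "(\<lambda>n. (\<Sum>j\<in>J n. \<integral>x. W n j x ^ 4 \<partial>M n)
                         / (prob_space.variance (M n) (\<lambda>x. \<Sum>j\<in>J n. W n j x)) ^ 2) \<longlonglongrightarrow> 0"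
  shows "weak_conv_m
           (\<lambda>n. distr (M n) borel
              (\<lambda>x. (\<Sum>j\<in>J n. W n j x) / sqrt (prob_space.variance (M n) (\<lambda>x. \<Sum>j\<in>J n. W n j x))))
           std_normal_distribution"
proof -
  define s where "s n = prob_space.variance (M n) (\<lambda>x. \<Sum>j\<in>J n. W n j x)" for n
  define L where "L n = (\<Sum>j\<in>J n. \<integral>x. W n j x ^ 4 \<partial>M n) / s n ^ 2" for n
  define S where "S = (\<lambda>n. distr (M n) borel (\<lambda>x. (\<Sum>j\<in>J n. W n j x) / sqrt (s n)))"
  have "weak_conv_m S std_normal_distribution"
  proof (rule levy_continuity)
    have "W n j \<in> borel_measurable (M n)" if "j \<in> J n" for n j
      using indep[of n] that unfolding prob_space.indep_vars_def2[OF prob] by blast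
    then show "real_distribution (S n)" for n
      unfolding S_def by (intro prob_space.real_distribution_distr[OF prob] borel_measurable_divide) auto
    show "real_distribution std_normal_distribution"
      by (rule real_dist_normal_dist)
    fix t :: real
    define B where "B = (\<lambda>n. \<bar>t\<bar> ^ 3 / 6 * (2 * sqrt (L n) + 1 / real (Suc n)) + t ^ 4 / 4 * L n)"
    have "eventually (\<lambda>n. cmod (char (S n) t - char std_normal_distribution t) \<le> B n) sequentially"
      using variance_pos
    proof eventually_elim
      case (elim n)
      define e where "e = sqrt (L n) + 1 / real (Suc n)"
      \<comment> \<open>the summand \<open>1 / Suc n\<close> keeps \<open>e\<close> positive where \<open>L n = 0\<close>\<close>
      have "0 \<le> L n"
        unfolding L_def by (intro divide_nonneg_nonneg sum_nonneg integral_nonneg_AE) auto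
      then have "e > 0" and "L n \<le> sqrt (L n) * e"
        unfolding e_def by (auto simp: add_nonneg_pos distrib_left)
      then have "e + L n / e \<le> 2 * sqrt (L n) + 1 / real (Suc n)"
        by (simp add: divide_le_eq e_def)
      moreover have "cmod (char (S n) t - char std_normal_distribution t)
          \<le> \<bar>t\<bar> ^ 3 / 6 * (e + L n / e) + t ^ 4 / 4 * L n"
        unfolding S_def L_def s_def
        by (rule prob_space.cmod_char_normalised_sum_sub_std_normal_le
            [OF prob fin indep fourth centred \<open>e > 0\<close>])
          (use elim in auto)
      ultimately show ?case
        unfolding B_def by (smt (verit) mult_left_mono zero_le_divide_iff zero_le_power abs_ge_zero)
    qed
    moreover have "B \<longlonglongrightarrow> 0"
    proof -
      have "B \<longlonglongrightarrow> \<bar>t\<bar> ^ 3 / 6 * (2 * sqrt 0 + 0) + t ^ 4 / 4 * 0"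
        unfolding B_def L_def s_def by (intro tendsto_intros lyapunov LIMSEQ_Suc[OF lim_inverse_n'])
      then show ?thesis
        by simp
    qed
    ultimately have "(\<lambda>n. char (S n) t - char std_normal_distribution t) \<longlonglongrightarrow> 0"
      by (rule Lim_null_comparison)
    then show "(\<lambda>n. char (S n) t) \<longlonglongrightarrow> char std_normal_distribution t"
      by (rule LIM_zero_cancel)
  qed
  then show ?thesis
    unfolding S_def s_def .
qed

section \<open>Differences from the mean of independent replicates\<close>

lemma power_mean_le_mean_power:
  fixes y :: "'b \<Rightarrow> real"
  assumes "finite A" "A \<noteq> {}" "even n"
  shows "((\<Sum>a\<in>A. y a) / card A) ^ n \<le> (\<Sum>a\<in>A. y a ^ n) / card A"
proof -
  have "(\<lambda>x. x ^ n) (\<Sum>a\<in>A. (1 / card A) *\<^sub>R y a) \<le> (\<Sum>a\<in>A. (1 / card A) * (\<lambda>x. x ^ n) (y a))"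
    using assms by (intro convex_on_sum[OF _ _ convex_power_even]) auto
  then show ?thesis
    by (simp add: sum_divide_distrib)
qed

lemma power4_diff_le:
  fixes a b :: real
  shows "(a - b) ^ 4 \<le> 8 * (a ^ 4 + b ^ 4)"
proof -
  have "((a + - b) / 2) ^ 4 \<le> (a ^ 4 + (- b) ^ 4) / 2"
    using power_mean_le_mean_power[where A = UNIV and y = "\<lambda>i. if i then a else - b" and n = 4]
    by (simp add: UNIV_bool)
  then show ?thesis
    by (simp add: power_divide)
qed

lemma (in finite_measure) integrable_central_power4:
  fixes X :: "'a \<Rightarrow> real"
  assumes [measurable]: "X \<in> borel_measurable M" and "integrable M (\<lambda>x. X x ^ 4)"
  shows "integrable M (\<lambda>x. (X x - c) ^ 4)"
proof (rule Bochner_Integration.integrable_bound)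
  show "integrable M (\<lambda>x. 8 * (X x ^ 4 + c ^ 4))"
    using assms(2) by auto
  show "AE x in M. norm ((X x - c) ^ 4) \<le> norm (8 * (X x ^ 4 + c ^ 4))"
    using power4_diff_le[of "X _" c] by (intro AE_I2) (simp add: add_nonneg_nonneg)
qed measurable

context prob_space
begin

context
  fixes X :: "'a \<Rightarrow> real" and Y :: "nat \<Rightarrow> 'a \<Rightarrow> real" and R :: nat
  assumes X_borel [measurable]: "X \<in> borel_measurable M"
    and Y_borel: "\<And>r. r < R \<Longrightarrow> Y r \<in> borel_measurable M"
    and Y_distr: "\<And>r. r < R \<Longrightarrow> distr M borel (Y r) = distr M borel X"
    and R_pos: "0 < R"
    and X_fourth: "integrable M (\<lambda>x. X x ^ 4)"
begin

lemma integrable_sample: "integrable M X"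
  by (rule integrable_power_le_even[OF X_borel _ X_fourth, where k = 1, simplified])

lemma
  assumes "r < R"
  shows integrable_replicate: "integrable M (Y r)"
    and expectation_replicate: "expectation (Y r) = expectation X"
    and integrable_replicate_central_power4: "integrable M (\<lambda>x. (Y r x - expectation X) ^ 4)"
    and expectation_replicate_central_power4:
      "expectation (\<lambda>x. (Y r x - expectation X) ^ 4) = expectation (\<lambda>x. (X x - expectation X) ^ 4)"
proof -
  note integrable_eq = integrable_comp_eq_if_distr_eq[OF X_borel Y_borel[OF assms] _ Y_distr[OF assms]]
  note integral_eq = integral_comp_eq_if_distr_eq[OF X_borel Y_borel[OF assms] _ Y_distr[OF assms]]
  have [measurable]: "(\<lambda>y. (y - expectation X) ^ 4) \<in> borel_measurable borel"
    by measurable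
  show "integrable M (Y r)"
    using integrable_eq[of "\<lambda>y. y"] integrable_sample by simp
  show "expectation (Y r) = expectation X"
    using integral_eq[of "\<lambda>y. y"] by simp
  show "integrable M (\<lambda>x. (Y r x - expectation X) ^ 4)"
    using integrable_eq[of "\<lambda>y. (y - expectation X) ^ 4"] integrable_central_power4[OF X_borel X_fourth]
    by simp
  show "expectation (\<lambda>x. (Y r x - expectation X) ^ 4) = expectation (\<lambda>x. (X x - expectation X) ^ 4)"
    using integral_eq[of "\<lambda>y. (y - expectation X) ^ 4"] by simp
qed

lemma borel_measurable_sub_mean_replicates [measurable]:
  "(\<lambda>x. X x - (\<Sum>r<R. Y r x) / real R) \<in> borel_measurable M"
  using Y_borel by (intro borel_measurable_diff borel_measurable_divide borel_measurable_sum) auto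

lemma expectation_sub_mean_replicates: "expectation (\<lambda>x. X x - (\<Sum>r<R. Y r x) / real R) = 0"
proof -
  have "expectation (\<lambda>x. \<Sum>r<R. Y r x) = (\<Sum>r<R. expectation (Y r))"
    using integrable_replicate by (simp add: Bochner_Integration.integral_sum)
  also have "\<dots> = real R * expectation X"
    using expectation_replicate by simp
  finally have "expectation (\<lambda>x. \<Sum>r<R. Y r x) = real R * expectation X" .
  moreover have "integrable M (\<lambda>x. (\<Sum>r<R. Y r x) / real R)"
    using integrable_replicate by (intro integrable_divide integrable_sum) auto
  ultimately show ?thesis
    using integrable_sample R_pos by (simp add: Bochner_Integration.integral_diff)
qed

lemma
  shows integrable_power4_sub_mean_replicates: "integrable M (\<lambda>x. (X x - (\<Sum>r<R. Y r x) / real R) ^ 4)"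
    and expectation_power4_sub_mean_replicates_le:
      "expectation (\<lambda>x. (X x - (\<Sum>r<R. Y r x) / real R) ^ 4)
         \<le> 16 * expectation (\<lambda>x. (X x - expectation X) ^ 4)"
proof -
  define \<mu> where "\<mu> = expectation X"
  define bound where "bound x = 8 * ((X x - \<mu>) ^ 4 + (\<Sum>r<R. (Y r x - \<mu>) ^ 4) / real R)" for x
  have pointwise: "(X x - (\<Sum>r<R. Y r x) / real R) ^ 4 \<le> bound x" for x
  proof -
    have split: "X x - (\<Sum>r<R. Y r x) / real R = (X x - \<mu>) - (\<Sum>r<R. Y r x - \<mu>) / real R"
      using R_pos by (simp add: sum_subtractf diff_divide_distrib)
    have mean:  "((\<Sum>r<R. Y r x - \<mu>) / real R) ^ 4 \<le> (\<Sum>r<R. (Y r x - \<mu>) ^ 4) / real R"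
      using power_mean_le_mean_power[of "{..<R}" 4 "\<lambda>r. Y r x - \<mu>"] R_pos
      by (simp add: lessThan_empty_iff)
    show ?thesis
      unfolding bound_def split using power4_diff_le[of "X x - \<mu>" "(\<Sum>r<R. Y r x - \<mu>) / real R"] mean
      by (smt (verit))
  qed
  have integrable_central: "integrable M (\<lambda>x. (X x - \<mu>) ^ 4)"
    by (rule integrable_central_power4[OF X_borel X_fourth])
  have integrable_replicates: "integrable M (\<lambda>x. (\<Sum>r<R. (Y r x - \<mu>) ^ 4) / real R)"
    unfolding \<mu>_def using integrable_replicate_central_power4 by (intro integrable_divide integrable_sum) auto
  have integrable_bound: "integrable M bound"
    unfolding bound_def
    by (intro integrable_mult_right Bochner_Integration.integrable_add integrable_central integrable_replicates)
  show integrable: "integrable M (\<lambda>x. (X x - (\<Sum>r<R. Y r x) / real R) ^ 4)"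
    using pointwise
    by (intro Bochner_Integration.integrable_bound[OF integrable_bound])
      (auto intro!: AE_I2 intro: order_trans[OF _ abs_ge_self])
  have "expectation (\<lambda>x. (X x - (\<Sum>r<R. Y r x) / real R) ^ 4) \<le> expectation bound"
    by (rule integral_mono[OF integrable integrable_bound pointwise])
  also have "\<dots> = 8 * (expectation (\<lambda>x. (X x - \<mu>) ^ 4)
      + expectation (\<lambda>x. (\<Sum>r<R. (Y r x - \<mu>) ^ 4) / real R))"
    unfolding bound_def
    by (simp only: integral_mult_right_zero
        Bochner_Integration.integral_add[OF integrable_central integrable_replicates])
  also have "expectation (\<lambda>x. (\<Sum>r<R. (Y r x - \<mu>) ^ 4) / real R) = expectation (\<lambda>x. (X x - \<mu>) ^ 4)"
    unfolding \<mu>_def using integrable_replicate_central_power4 expectation_replicate_central_power4 R_pos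
    by (simp add: Bochner_Integration.integral_sum)
  finally show "expectation (\<lambda>x. (X x - (\<Sum>r<R. Y r x) / real R) ^ 4)
      \<le> 16 * expectation (\<lambda>x. (X x - expectation X) ^ 4)"
    by (simp add: \<mu>_def)
qed

lemma variance_le_expectation_power2_sub_mean_replicates:
  assumes integrable_cross: "\<And>r. r < R \<Longrightarrow> integrable M (\<lambda>x. X x * Y r x)"
    and uncorrelated: "\<And>r. r < R \<Longrightarrow> expectation (\<lambda>x. X x * Y r x) = expectation X * expectation (Y r)"
  shows "variance X \<le> expectation (\<lambda>x. (X x - (\<Sum>r<R. Y r x) / real R) ^ 2)"
proof -
  define \<mu> where "\<mu> = expectation X"
  define B where "B x = (\<Sum>r<R. Y r x - \<mu>) / real R" for x
  have centred_cross: "integrable M (\<lambda>x. (X x - \<mu>) * (Y r x - \<mu>))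
      \<and> expectation (\<lambda>x. (X x - \<mu>) * (Y r x - \<mu>)) = 0" if "r < R" for r
  proof -
    have "(\<lambda>x. (X x - \<mu>) * (Y r x - \<mu>)) = (\<lambda>x. X x * Y r x - \<mu> * Y r x - \<mu> * X x + \<mu> * \<mu>)"
      by (auto simp: algebra_simps)
    then show ?thesis
      using integrable_cross[OF that] uncorrelated[OF that] integrable_sample integrable_replicate[OF that]
        expectation_replicate[OF that]
      by (simp add: \<mu>_def prob_space)
  qed
  have cross_sum: "(\<lambda>x. (X x - \<mu>) * B x) = (\<lambda>x. (\<Sum>r<R. (X x - \<mu>) * (Y r x - \<mu>)) / real R)"
    by (simp add: B_def sum_distrib_left)
  have integrable_AB: "integrable M (\<lambda>x. (X x - \<mu>) * B x)"
    unfolding cross_sum using centred_cross by (intro integrable_divide integrable_sum) auto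
  have expectation_AB: "expectation (\<lambda>x. (X x - \<mu>) * B x) = 0"
    unfolding cross_sum using centred_cross by (simp add: Bochner_Integration.integral_sum)
  have integrable_A2: "integrable M (\<lambda>x. (X x - \<mu>) ^ 2)"
    by (rule integrable_power_le_even[OF _ _ integrable_central_power4[OF X_borel X_fourth]]) auto
  have integrable_W2: "integrable M (\<lambda>x. (X x - (\<Sum>r<R. Y r x) / real R) ^ 2)"
    by (rule integrable_power_le_even[OF _ _ integrable_power4_sub_mean_replicates]) auto
  have "variance X = expectation (\<lambda>x. (X x - \<mu>) ^ 2 - 2 * ((X x - \<mu>) * B x))"
    using integrable_A2 integrable_AB expectation_AB by (simp add: \<mu>_def)
  also have "\<dots> \<le> expectation (\<lambda>x. (X x - (\<Sum>r<R. Y r x) / real R) ^ 2)"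
  proof (rule integral_mono)
    show "integrable M (\<lambda>x. (X x - \<mu>) ^ 2 - 2 * ((X x - \<mu>) * B x))"
      using integrable_A2 integrable_AB by auto
    show "(X x - \<mu>) ^ 2 - 2 * ((X x - \<mu>) * B x) \<le> (X x - (\<Sum>r<R. Y r x) / real R) ^ 2" for x
    proof -
      have split: "X x - (\<Sum>r<R. Y r x) / real R = (X x - \<mu>) - B x"
        using R_pos by (simp add: B_def sum_subtractf diff_divide_distrib)
      have "(X x - (\<Sum>r<R. Y r x) / real R) ^ 2 = (X x - \<mu>) ^ 2 - 2 * ((X x - \<mu>) * B x) + B x ^ 2"
        unfolding split by (simp add: power2_eq_square algebra_simps)
      then show ?thesis
        by simp
    qed
  qed (rule integrable_W2)
  finally show ?thesis .
qed

end

end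

lemma sum_power2_variances_div_eq_gamma_sq:
  assumes "finite I" and "(\<Sum>i\<in>I. prob_space.variance M (X i)) \<noteq> 0"
  shows "(\<Sum>i\<in>I. (prob_space.variance M (X i)) ^ 2) / (\<Sum>i\<in>I. prob_space.variance M (X i)) ^ 2
           = (1 + gamma_sq M I X) / real (card I)"
proof -
  have "card I > 0"
    using assms by (auto simp: card_gt_0_iff)
  then show ?thesis
    using assms(2) by (simp add: gamma_sq_def sigma_bar_sq_def field_simps power2_eq_square)
qed

context prob_space
begin

context
  fixes I :: "'i set" and X :: "'i \<Rightarrow> 'a \<Rightarrow> real" and R :: "'i \<Rightarrow> nat"
    and Y :: "'i \<Rightarrow> nat \<Rightarrow> 'a \<Rightarrow> real"
  assumes finite_samples: "finite I"
    and indep_samples: "indep_vars (\<lambda>_. borel) (\<lambda>k. case k of Inl i \<Rightarrow> X i | Inr (i, r) \<Rightarrow> Y i r)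
                          (Inl ` I \<union> Inr ` (SIGMA i:I. {..<R i}))"
    and replicates_distr: "\<And>i r. i \<in> I \<Longrightarrow> r < R i \<Longrightarrow> distr M borel (Y i r) = distr M borel (X i)"
    and fourth_samples: "\<And>i. i \<in> I \<Longrightarrow> integrable M (\<lambda>x. X i x ^ 4)"
    and replicates_pos: "\<And>i. i \<in> I \<Longrightarrow> 0 < R i"
begin

lemma indep_vars_replicate_diffs:
  "indep_vars (\<lambda>_. borel) (\<lambda>i x. X i x - (\<Sum>r<R i. Y i r x) / real (R i)) I"
proof -
  define Z where "Z = (\<lambda>k. case k of Inl i \<Rightarrow> X i | Inr (i, r) \<Rightarrow> Y i r)"
  define block where "block i = insert (Inl i) (Inr ` ({i} \<times> {..<R i}))" for i
  define g where "g i f = f (Inl i) - (\<Sum>r<R i. f (Inr (i, r))) / real (R i)"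
    for i and f :: "'i + 'i \<times> nat \<Rightarrow> real"
  have "indep_vars (\<lambda>i. PiM (block i) (\<lambda>_. borel)) (\<lambda>i \<omega>. restrict (\<lambda>k. Z k \<omega>) (block i)) I"
    using indep_samples unfolding Z_def
    by (rule indep_vars_restrict) (auto simp: block_def disjoint_family_on_def)
  then have "indep_vars (\<lambda>_. borel) (\<lambda>i \<omega>. g i (restrict (\<lambda>k. Z k \<omega>) (block i))) I"
    by (rule indep_vars_compose2) (auto simp: g_def block_def
        intro!: borel_measurable_diff borel_measurable_divide borel_measurable_sum measurable_component_singleton)
  moreover have "g i (restrict (\<lambda>k. Z k \<omega>) (block i)) = X i \<omega> - (\<Sum>r<R i. Y i r \<omega>) / real (R i)" for i \<omega>
    by (auto simp: g_def block_def Z_def intro!: sum.cong)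
  ultimately show ?thesis
    by simp
qed

lemma
  assumes "i \<in> I"
  shows integrable_power4_replicate_diff:
      "integrable M (\<lambda>x. (X i x - (\<Sum>r<R i. Y i r x) / real (R i)) ^ 4)"
    and expectation_replicate_diff: "expectation (\<lambda>x. X i x - (\<Sum>r<R i. Y i r x) / real (R i)) = 0"
    and expectation_power4_replicate_diff_le:
      "expectation (\<lambda>x. (X i x - (\<Sum>r<R i. Y i r x) / real (R i)) ^ 4)
         \<le> 16 * expectation (\<lambda>x. (X i x - expectation (X i)) ^ 4)"
    and variance_le_expectation_power2_replicate_diff:
      "variance (X i) \<le> expectation (\<lambda>x. (X i x - (\<Sum>r<R i. Y i r x) / real (R i)) ^ 2)"
proof -
  have "X i \<in> borel_measurable M" and "\<And>r. r < R i \<Longrightarrow> Y i r \<in> borel_measurable M"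
    using indep_samples assms unfolding indep_vars_def2 by force+
  note replicate_facts = this replicates_distr[OF assms] replicates_pos[OF assms] fourth_samples[OF assms]
  show "integrable M (\<lambda>x. (X i x - (\<Sum>r<R i. Y i r x) / real (R i)) ^ 4)"
    by (rule integrable_power4_sub_mean_replicates[OF replicate_facts])
  show "expectation (\<lambda>x. X i x - (\<Sum>r<R i. Y i r x) / real (R i)) = 0"
    by (rule expectation_sub_mean_replicates[OF replicate_facts])
  show "expectation (\<lambda>x. (X i x - (\<Sum>r<R i. Y i r x) / real (R i)) ^ 4)
      \<le> 16 * expectation (\<lambda>x. (X i x - expectation (X i)) ^ 4)"
    by (rule expectation_power4_sub_mean_replicates_le[OF replicate_facts])
  have uncorrelated: "integrable M (\<lambda>x. X i x * Y i r x)
      \<and> expectation (\<lambda>x. X i x * Y i r x) = expectation (X i) * expectation (Y i r)" if "r < R i" for r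
  proof -
    have members: "Inl i \<in> Inl ` I \<union> Inr ` (SIGMA i:I. {..<R i})"
      "Inr (i, r) \<in> Inl ` I \<union> Inr ` (SIGMA i:I. {..<R i})"
      using assms that by auto
    show ?thesis
      using indep_vars_integrable_mult[OF indep_samples members] indep_vars_integral_mult[OF indep_samples members]
        integrable_sample[where Y = "Y i", OF replicate_facts]
        integrable_replicate[where Y = "Y i", OF replicate_facts that]
      by simp
  qed
  show "variance (X i) \<le> expectation (\<lambda>x. (X i x - (\<Sum>r<R i. Y i r x) / real (R i)) ^ 2)"
    using uncorrelated by (intro variance_le_expectation_power2_sub_mean_replicates[OF replicate_facts]) auto
qed

lemma sum_variances_le_variance_sum_replicate_diffs:
  "(\<Sum>i\<in>I. variance (X i)) \<le> variance (\<lambda>x. \<Sum>i\<in>I. X i x - (\<Sum>r<R i. Y i r x) / real (R i))"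
proof -
  have "integrable M (\<lambda>x. (X i x - (\<Sum>r<R i. Y i r x) / real (R i)) ^ 2)" if "i \<in> I" for i
  proof (rule integrable_power_le_even[OF _ _ integrable_power4_replicate_diff[OF that]])
    show "(\<lambda>x. X i x - (\<Sum>r<R i. Y i r x) / real (R i)) \<in> borel_measurable M"
      using indep_vars_replicate_diffs that unfolding indep_vars_def2 by blast
  qed auto
  then have "variance (\<lambda>x. \<Sum>i\<in>I. X i x - (\<Sum>r<R i. Y i r x) / real (R i))
      = (\<Sum>i\<in>I. expectation (\<lambda>x. (X i x - (\<Sum>r<R i. Y i r x) / real (R i)) ^ 2))"
    by (intro variance_indep_sum_centred finite_samples indep_vars_replicate_diffs expectation_replicate_diff)
  then show ?thesis
    by (simp add: sum_mono variance_le_expectation_power2_replicate_diff)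
qed

lemma variance_sum_replicate_diffs_pos:
  assumes "I \<noteq> {}" and "\<And>i. i \<in> I \<Longrightarrow> 0 < variance (X i)"
  shows "0 < variance (\<lambda>x. \<Sum>i\<in>I. X i x - (\<Sum>r<R i. Y i r x) / real (R i))"
proof -
  have "0 < (\<Sum>i\<in>I. variance (X i))"
    using finite_samples assms by (intro sum_pos)
  then show ?thesis
    using sum_variances_le_variance_sum_replicate_diffs by linarith
qed

lemma lyapunov_ratio_replicate_diffs_le:
  assumes "I \<noteq> {}" and variance_pos: "\<And>i. i \<in> I \<Longrightarrow> 0 < variance (X i)"
    and kurtosis_le: "\<And>i. i \<in> I \<Longrightarrow> kurtosis M (X i) \<le> \<kappa>"
    and gamma_sq_le: "gamma_sq M I X \<le> B"
  shows "(\<Sum>i\<in>I. expectation (\<lambda>x. (X i x - (\<Sum>r<R i. Y i r x) / real (R i)) ^ 4))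
           / (variance (\<lambda>x. \<Sum>i\<in>I. X i x - (\<Sum>r<R i. Y i r x) / real (R i))) ^ 2
         \<le> 16 * \<kappa> * (1 + B) / card I"
proof -
  define S2 where "S2 = (\<Sum>i\<in>I. variance (X i))"
  define T where "T = (\<Sum>i\<in>I. expectation (\<lambda>x. (X i x - (\<Sum>r<R i. Y i r x) / real (R i)) ^ 4))"
  have "0 < S2"
    unfolding S2_def using finite_samples \<open>I \<noteq> {}\<close> variance_pos by (intro sum_pos)
  obtain i where "i \<in> I"
    using \<open>I \<noteq> {}\<close> by blast
  have "0 \<le> kurtosis M (X i)"
    unfolding kurtosis_def by (intro divide_nonneg_nonneg integral_nonneg_AE) auto
  then have "0 \<le> \<kappa>"
    using kurtosis_le[OF \<open>i \<in> I\<close>] by linarith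
  have fourth_le: "expectation (\<lambda>x. (X i x - (\<Sum>r<R i. Y i r x) / real (R i)) ^ 4)
      \<le> 16 * \<kappa> * variance (X i) ^ 2"
    if "i \<in> I" for i
    using expectation_power4_replicate_diff_le[OF that] kurtosis_le[OF that] variance_pos[OF that]
    by (simp add: kurtosis_def divide_le_eq)
  have "0 \<le> T"
    unfolding T_def by (intro sum_nonneg integral_nonneg_AE) auto
  then have "T / (variance (\<lambda>x. \<Sum>i\<in>I. X i x - (\<Sum>r<R i. Y i r x) / real (R i))) ^ 2 \<le> T / S2 ^ 2"
    unfolding S2_def using \<open>0 < S2\<close> sum_variances_le_variance_sum_replicate_diffs
    by (intro divide_left_mono power_mono mult_pos_pos) (auto simp: S2_def)
  also have "\<dots> \<le> 16 * \<kappa> * (\<Sum>i\<in>I. variance (X i) ^ 2) / S2 ^ 2"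
    unfolding T_def using \<open>0 < S2\<close> fourth_le
    by (intro divide_right_mono) (auto simp: sum_distrib_left intro: sum_mono)
  also have "\<dots> = 16 * \<kappa> * ((\<Sum>i\<in>I. variance (X i) ^ 2) / S2 ^ 2)"
    by simp
  also have "\<dots> = 16 * \<kappa> * ((1 + gamma_sq M I X) / card I)"
    using sum_power2_variances_div_eq_gamma_sq[OF finite_samples, of M X] \<open>0 < S2\<close>
    unfolding S2_def by (simp only:)
  also have "\<dots> \<le> 16 * \<kappa> * (1 + B) / card I"
    using \<open>0 \<le> \<kappa>\<close> gamma_sq_le by (simp add: divide_right_mono mult_left_mono)
  finally show ?thesis
    unfolding T_def .
qed

end

end

theorem lemma4:
  fixes M :: "nat \<Rightarrow> 'a measure"
    and I :: "nat \<Rightarrow> 'i set"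
    and X :: "nat \<Rightarrow> 'i \<Rightarrow> 'a \<Rightarrow> real"
    and R :: "nat \<Rightarrow> 'i \<Rightarrow> nat"
    and Y :: "nat \<Rightarrow> 'i \<Rightarrow> nat \<Rightarrow> 'a \<Rightarrow> real"
    and \<kappa>max :: real
  assumes prob: "\<And>n. prob_space (M n)"
    and fin: "\<And>n. finite (I n)"
    and card_lim: "filterlim (\<lambda>n. card (I n)) at_top sequentially"
    and indep: "\<And>n. prob_space.indep_vars (M n) (\<lambda>_. borel)
                  (\<lambda>k. case k of Inl i \<Rightarrow> X n i | Inr (i, r) \<Rightarrow> Y n i r)
                  (Inl ` I n \<union> Inr ` (SIGMA i:I n. {..<R n i}))"
    and copies: "\<And>n i r. i \<in> I n \<Longrightarrow> r < R n i \<Longrightarrow>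
                  distr (M n) borel (Y n i r) = distr (M n) borel (X n i)"
    and fourth: "\<And>n i. i \<in> I n \<Longrightarrow> integrable (M n) (\<lambda>x. (X n i x) ^ 4)"
    and var_pos: "\<And>n i. i \<in> I n \<Longrightarrow> prob_space.variance (M n) (X n i) > 0"
    and R1: "\<And>n i. i \<in> I n \<Longrightarrow> R n i \<ge> 2"
    and R2: "\<And>n i. i \<in> I n \<Longrightarrow> kurtosis (M n) (X n i) \<le> \<kappa>max"
    and R3: "\<exists>B. \<forall>n. gamma_sq (M n) (I n) (X n) \<le> B"
  shows "weak_conv_m
           (\<lambda>n. distr (M n) borel
              (\<lambda>x. (\<Sum>i\<in>I n. X n i x - (\<Sum>r<R n i. Y n i r x) / real (R n i))
                   / sqrt (prob_space.variance (M n)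
                       (\<lambda>z. \<Sum>i\<in>I n. X n i z - (\<Sum>r<R n i. Y n i r z) / real (R n i)))))
           std_normal_distribution"
proof -
  define W where "W = (\<lambda>n i x. X n i x - (\<Sum>r<R n i. Y n i r x) / real (R n i))"
  have R_pos: "0 < R n i" if "i \<in> I n" for n i
    using R1[OF that] by linarith
  note replicates = prob fin indep copies fourth R_pos
  obtain B where B: "\<And>n. gamma_sq (M n) (I n) (X n) \<le> B"
    using R3 by blast
  have nonempty: "\<forall>\<^sub>F n in sequentially. I n \<noteq> {}"
    using card_lim[unfolded filterlim_at_top, rule_format, of 1] by (rule eventually_mono) auto
  have "weak_conv_m (\<lambda>n. distr (M n) borel (\<lambda>x. (\<Sum>i\<in>I n. W n i x)
          / sqrt (prob_space.variance (M n) (\<lambda>x. \<Sum>i\<in>I n. W n i x)))) std_normal_distribution"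
  proof (rule lyapunov_clt_fourth_moment[OF prob fin])
    show "prob_space.indep_vars (M n) (\<lambda>_. borel) (W n) (I n)" for n
      unfolding W_def by (rule prob_space.indep_vars_replicate_diffs[OF replicates])
    show "integrable (M n) (\<lambda>x. W n i x ^ 4)" if "i \<in> I n" for n i
      unfolding W_def by (rule prob_space.integrable_power4_replicate_diff[OF replicates that])
    show "(\<integral>x. W n i x \<partial>M n) = 0" if "i \<in> I n" for n i
      unfolding W_def by (rule prob_space.expectation_replicate_diff[OF replicates that])
    show "\<forall>\<^sub>F n in sequentially. 0 < prob_space.variance (M n) (\<lambda>x. \<Sum>i\<in>I n. W n i x)"
      using nonempty unfolding W_def
      by eventually_elim (rule prob_space.variance_sum_replicate_diffs_pos[OF replicates _ var_pos])
    show "(\<lambda>n. (\<Sum>i\<in>I n. \<integral>x. W n i x ^ 4 \<partial>M n)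
        / (prob_space.variance (M n) (\<lambda>x. \<Sum>i\<in>I n. W n i x)) ^ 2) \<longlonglongrightarrow> 0"
    proof (rule tendsto_sandwich[where f = "\<lambda>_. 0" and h = "\<lambda>n. 16 * \<kappa>max * (1 + B) / card (I n)"])
      show "\<forall>\<^sub>F n in sequentially. 0 \<le> (\<Sum>i\<in>I n. \<integral>x. W n i x ^ 4 \<partial>M n)
          / (prob_space.variance (M n) (\<lambda>x. \<Sum>i\<in>I n. W n i x)) ^ 2"
        by (intro always_eventually allI divide_nonneg_nonneg sum_nonneg integral_nonneg_AE) auto
      show "\<forall>\<^sub>F n in sequentially. (\<Sum>i\<in>I n. \<integral>x. W n i x ^ 4 \<partial>M n)
          / (prob_space.variance (M n) (\<lambda>x. \<Sum>i\<in>I n. W n i x)) ^ 2 \<le> 16 * \<kappa>max * (1 + B) / card (I n)"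
        using nonempty unfolding W_def
        by eventually_elim (rule prob_space.lyapunov_ratio_replicate_diffs_le[OF replicates _ var_pos R2 B])
      show "(\<lambda>n. 16 * \<kappa>max * (1 + B) / card (I n)) \<longlonglongrightarrow> 0"
        using filterlim_compose[OF filterlim_real_sequentially card_lim]
        by (intro tendsto_divide_0[OF tendsto_const] filterlim_at_top_imp_at_infinity)
    qed simp
  qed
  then show ?thesis
    unfolding W_def .
qed

end
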